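(* Let $n\in\{1,2\}$ and let $\Gamma$, $\phi$, $c_1$, $\delta$, $U_r$, $\varrho$, $\widetilde{\mathcal T}_h$ and $D_h$ be as in the context. Denote by $r_0\in(0,1)$ the unique zero of the function $r\mapsto \arccos(r)-c_1 r$, set $c_2=\frac{\pi}{2}+c_1$ and $\widehat\varepsilon=\varepsilon\arccos(\frac{h}{\varepsilon})-c_1h$. Suppose that $\varepsilon=\gamma h$ for some $\gamma>\frac{1}{r_0}$ and that $c_2\varepsilon<\delta$. Then $\widehat\varepsilon>0$ and $$\Gamma\subset U_{\widehat\varepsilon}\subset D_h\subset U_{c_2\varepsilon}\subset U_\delta .$$ Furthermore there is a constant $C$, independent of $h$ and $\varepsilon$, such that $$\varrho(x)\le C\Bigl(\frac{h}{\varepsilon}\Bigr)^{2(q+1)}\qquad \text{for all } x\in D_h\setminus U_{\widehat\varepsilon}.$$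
   Context: $\Gamma\subset\mathbb R^{n+1}$ is a smooth, connected, compact, orientable hypersurface without boundary. $\Omega$ is a bounded polyhedral open neighbourhood of $\Gamma$ and $\phi:\overline\Omega\to\mathbb R$ is smooth with $\Gamma=\{x\in\Omega:\phi(x)=0\}$ and $c_0\le|\nabla\phi(x)|\le c_1$ for all $x\in\overline\Omega$, where $0<c_0\le c_1$. For $r>0$, $U_r:=\{x\in\Omega:|\phi(x)|<r\}$. The number $\delta>0$ is such that for every $p\in\Gamma$ the ODE $\gamma_p'(s)=\frac{A(p)\nabla\phi(\gamma_p(s))}{A(p)\nabla\phi(\gamma_p(s))\cdot\nabla\phi(\gamma_p(s))}$, $\gamma_p(0)=p$ (with $A(p)$ a given symmetric positive definite matrix field on $\Gamma$) has a unique solution on $(-\delta,\delta)$, so that $(p,s)\mapsto\gamma_p(s)$ is a bijection from $\Gamma\times(-\delta,\delta)$ onto $U_\delta$ (note $\phi(\gamma_p(s))=s$). Let $q\ge 0$ be an integer and let a quadrature rule on the reference simplex $\widehat T\subset\mathbb R^{n+1}$ be given, $\widehat Q(\widehat g)=|\widehat T|\sum_{i=1}^L\omega_i\widehat g(\widehat b_i)$ with $\omega_i>0$, $\sum_i\omega_i=1$, $\widehat b_i\in\widehat T$, exact for polynomials of degree $\le q$; on a simplex $T$ set $b_{i,T}=\Phi_T(\widehat b_i)$ where $\Phi_T$ is the affine map from $\widehat T$ onto $T$. Define $\sigma(r)=\cos^{2(q+1)}(r)$ for $|r|\le\frac\pi2$ and $\sigma(r)=0$ for $|r|>\frac\pi2$,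 and the phase field function $\varrho(x)=\sigma(\phi(x)/\varepsilon)$, $x\in\Omega$. $\mathcal T_h$ is a regular partition of $\overline\Omega$ into simplices $T$ with $h=\max_T\operatorname{diam}(T)$. For $h<\varepsilon$, $\widetilde{\mathcal T}_h:=\{T\in\mathcal T_h: |\phi(b_{i,T})|\le\varepsilon\arccos(h/\varepsilon)\text{ for all } i=1,\dots,L\}$ and $D_h:=\bigcup_{T\in\widetilde{\mathcal T}_h}T$. *)

theory Defs
  imports "HOL-Analysis.Analysis"
begin

inductive_set iter_partials :: "('a::euclidean_space \<Rightarrow> real) \<Rightarrow> ('a \<Rightarrow> real) set"
  for f :: "'a \<Rightarrow> real" where
  base: "f \<in> iter_partials f"
| step: "g \<in> iter_partials f \<Longrightarrow> i \<in> Basis \<Longrightarrow>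
         (\<lambda>x. frechet_derivative g (at x) i) \<in> iter_partials f"

definition smooth_on :: "'a::euclidean_space set \<Rightarrow> ('a \<Rightarrow> real) \<Rightarrow> bool" where
  "smooth_on S f \<longleftrightarrow> open S \<and>
     (\<forall>g \<in> iter_partials f. g differentiable_on S \<and> continuous_on S g)"

definition grad :: "('a::euclidean_space \<Rightarrow> real) \<Rightarrow> 'a \<Rightarrow> 'a" where
  "grad f x = (\<Sum>i\<in>Basis. frechet_derivative f (at x) i *\<^sub>R i)"

definition multi_indices :: "nat \<Rightarrow> ('a::euclidean_space \<Rightarrow> nat) set" where
  "multi_indices q = {k. (\<forall>i. i \<notin> Basis \<longrightarrow> k i = 0) \<and> sum k Basis \<le> q}"

definition poly_deg_le :: "nat \<Rightarrow> ('a::euclidean_space \<Rightarrow> real) \<Rightarrow> bool" where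
  "poly_deg_le q g \<longleftrightarrow> (\<exists>c :: ('a \<Rightarrow> nat) \<Rightarrow> real.
      g = (\<lambda>x. \<Sum>k\<in>multi_indices q. c k * (\<Prod>i\<in>Basis. (x \<bullet> i) ^ k i)))"

definition ref_simplex :: "'a::euclidean_space set" where
  "ref_simplex = convex hull (insert 0 Basis)"

definition quadrature_rule :: "nat \<Rightarrow> nat \<Rightarrow> (nat \<Rightarrow> real) \<Rightarrow> (nat \<Rightarrow> 'a::euclidean_space) \<Rightarrow> bool" where
  "quadrature_rule q L \<omega> bh \<longleftrightarrow>
     (\<forall>i\<in>{1..L}. \<omega> i > 0 \<and> bh i \<in> ref_simplex) \<and> (\<Sum>i=1..L. \<omega> i) = 1 \<and>
     (\<forall>g. poly_deg_le q g \<longrightarrow>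
        (g has_integral (measure lebesgue (ref_simplex :: 'a set) * (\<Sum>i=1..L. \<omega> i * g (bh i)))) ref_simplex)"

definition affine_map :: "('a::euclidean_space \<Rightarrow> 'a) \<Rightarrow> bool" where
  "affine_map F \<longleftrightarrow> (\<exists>f c. linear f \<and> F = (\<lambda>x. f x + c))"

definition regular_partition :: "'a::euclidean_space set set \<Rightarrow> 'a set \<Rightarrow> bool" where
  "regular_partition \<T> K \<longleftrightarrow> finite \<T> \<and> \<T> \<noteq> {} \<and>
     (\<forall>T\<in>\<T>. int DIM('a) simplex T) \<and> \<Union>\<T> = K \<and>
     (\<forall>T\<in>\<T>. \<forall>T'\<in>\<T>. T \<noteq> T' \<longrightarrow>
        interior T \<inter> interior T' = {} \<and>
        (T \<inter> T' = {} \<or> (T \<inter> T' face_of T \<and> T \<inter> T' face_of T')))"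

definition meshsize :: "'a::euclidean_space set set \<Rightarrow> real" where
  "meshsize \<T> = Max (diameter ` \<T>)"

definition sigma_pf :: "nat \<Rightarrow> real \<Rightarrow> real" where
  "sigma_pf q r = (if \<bar>r\<bar> \<le> pi / 2 then cos r ^ (2 * (q + 1)) else 0)"

definition U_nbhd :: "'a set \<Rightarrow> ('a \<Rightarrow> real) \<Rightarrow> real \<Rightarrow> 'a set" where
  "U_nbhd \<Omega> \<phi> r = {x\<in>\<Omega>. \<bar>\<phi> x\<bar> < r}"

definition active_elements ::
  "'a set set \<Rightarrow> ('a set \<Rightarrow> 'a \<Rightarrow> 'a) \<Rightarrow> nat \<Rightarrow> (nat \<Rightarrow> 'a) \<Rightarrow> ('a \<Rightarrow> real) \<Rightarrow> real \<Rightarrow> real \<Rightarrow> 'a set set" where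
  "active_elements \<T> \<Phi> L bh \<phi> \<epsilon> h =
     {T\<in>\<T>. \<forall>i\<in>{1..L}. \<bar>\<phi> (\<Phi> T (bh i))\<bar> \<le> \<epsilon> * arccos (h / \<epsilon>)}"

definition r0_of :: "real \<Rightarrow> real" where
  "r0_of c1 = (THE r. 0 < r \<and> r < 1 \<and> arccos r - c1 * r = 0)"

end

theory Submission
  imports Defs
begin

text \<open>
  With \<open>t = h/\<epsilon> = 1/\<gamma> < r0\<close> we have \<open>arccos t > c1 t\<close>, so
  \<open>\<epsilon>h = \<epsilon> (arccos t - c1 t) > 0\<close>. Since \<open>|\<nabla>\<phi>| \<le> c1\<close>, the level function varies by at
  most \<open>c1 h\<close> on every simplex: a simplex meeting \<open>U_\<epsilon>h\<close> has all its quadrature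
  points in the band \<open>|\<phi>| \<le> \<epsilon> arccos(h/\<epsilon>)\<close>, and every point of an active simplex has
  \<open>|\<phi>| \<le> \<epsilon> arccos(h/\<epsilon>) + c1 h < (\<pi>/2 + c1) \<epsilon>\<close>. Outside \<open>U_\<epsilon>h\<close> we have
  \<open>|\<phi>/\<epsilon>| \<ge> arccos t - c1 t\<close>, and \<open>cos (arccos t - c1 t) \<le> t + c1 t\<close> bounds the
  phase field by \<open>((1 + c1) t)^(2(q+1))\<close>.

  The one delicate point is that \<open>U_r\<close> consists of points of the open set \<open>\<Omega>\<close>, while the
  active simplices cover parts of its closure. A point of the closure with \<open>|\<phi>| < \<delta>\<close> lies
  in \<open>\<Omega>\<close> because the flow \<open>(p, s) \<mapsto> \<gamma>_p(s)\<close> is continuous (Lipschitz in \<open>s\<close>, and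
  continuous in \<open>p\<close> by a Gronwall estimate, the normalized field \<open>A\<nabla>\<phi> / (A\<nabla>\<phi> \<cdot> \<nabla>\<phi>)\<close>
  being Lipschitz on the compact closure) and \<open>\<phi>(\<gamma>_p(s)) = s\<close>: the image of the compact set
  \<open>\<Gamma> \<times> [-d, d]\<close> is closed and contains all points of \<open>\<Omega>\<close> with \<open>|\<phi>| < d\<close>.
\<close>

section \<open>The threshold \<open>r0\<close> and the phase field\<close>

lemma r0_of_root:
  fixes c1 :: real
  assumes "0 < c1"
  shows "0 < r0_of c1" "r0_of c1 < 1" "arccos (r0_of c1) = c1 * r0_of c1"
proof -
  define f where "f r = arccos r - c1 * r" for r
  have f_strict_decr: "f y < f x" if "-1 \<le> x" "x < y" "y \<le> 1" for x y
    using arccos_less_arccos[OF that] mult_strict_left_mono[OF that(2) assms]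
    unfolding f_def by linarith
  have "\<exists>r. 0 \<le> r \<and> r \<le> 1 \<and> f r = 0"
    using assms unfolding f_def by (intro IVT2') (auto intro!: continuous_intros)
  then obtain r where r: "0 \<le> r" "r \<le> 1" "f r = 0" by blast
  have r_open: "0 < r" "r < 1"
    using r assms unfolding f_def by (auto simp: le_less)
  have "r0_of c1 = r"
    unfolding r0_of_def
  proof (rule the_equality)
    show "0 < r \<and> r < 1 \<and> arccos r - c1 * r = 0" using r_open r(3) by (simp add: f_def)
  next
    fix r' assume "0 < r' \<and> r' < 1 \<and> arccos r' - c1 * r' = 0"
    then show "r' = r"
      using f_strict_decr[of r r'] f_strict_decr[of r' r] r r_open
      by (cases r' r rule: linorder_cases) (auto simp: f_def)
  qed
  then show "0 < r0_of c1" "r0_of c1 < 1" "arccos (r0_of c1) = c1 * r0_of c1"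
    using r_open r(3) by (simp_all add: f_def)
qed

lemma mult_less_arccos_below_r0_of:
  fixes c1 t :: real
  assumes "0 < c1" "0 < t" "t < r0_of c1"
  shows "c1 * t < arccos t"
proof -
  have "c1 * t < c1 * r0_of c1" using assms by simp
  also have "\<dots> = arccos (r0_of c1)" using r0_of_root[OF assms(1)] by simp
  also have "\<dots> < arccos t"
    using r0_of_root[OF assms(1)] assms by (intro arccos_less_arccos) auto
  finally show ?thesis .
qed

lemma cos_le_of_arccos_sub_le:
  fixes c1 t u :: real
  assumes "0 \<le> c1" "0 < t" "t \<le> 1" "c1 * t \<le> arccos t"
    and "arccos t - c1 * t \<le> u" "u \<le> pi / 2"
  shows "cos u \<le> (1 + c1) * t"
proof -
  have "arccos t \<le> pi" using assms by (intro arccos_ubound) auto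
  have "cos u \<le> cos (arccos t - c1 * t)"
    using assms by (subst cos_mono_le_eq) auto
  also have "\<dots> = t * cos (c1 * t) + sin (arccos t) * sin (c1 * t)"
    using assms by (simp add: cos_diff)
  also have "\<dots> \<le> t * 1 + 1 * (c1 * t)"
  proof (rule add_mono)
    show "t * cos (c1 * t) \<le> t * 1" using assms by (intro mult_left_mono) auto
    have "0 \<le> sin (c1 * t)" using assms \<open>arccos t \<le> pi\<close> by (intro sin_ge_zero) auto
    then show "sin (arccos t) * sin (c1 * t) \<le> 1 * (c1 * t)"
      using assms by (intro mult_mono sin_x_le_x) auto
  qed
  finally show ?thesis by (simp add: algebra_simps)
qed

lemma sigma_pf_le_outside_band:
  fixes c1 t \<epsilon> s :: real
  assumes "0 \<le> c1" "0 < t" "t \<le> 1" "c1 * t \<le> arccos t" "0 < \<epsilon>"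
    and "\<epsilon> * (arccos t - c1 * t) \<le> \<bar>s\<bar>"
  shows "sigma_pf q (s / \<epsilon>) \<le> ((1 + c1) * t) ^ (2 * (q + 1))"
proof (cases "\<bar>s / \<epsilon>\<bar> \<le> pi / 2")
  case True
  have shift_le: "arccos t - c1 * t \<le> \<bar>s / \<epsilon>\<bar>"
    using assms by (simp add: abs_divide field_simps)
  have "sigma_pf q (s / \<epsilon>) = cos \<bar>s / \<epsilon>\<bar> ^ (2 * (q + 1))"
    using True unfolding sigma_pf_def cos_abs_real by simp
  also have "\<dots> \<le> ((1 + c1) * t) ^ (2 * (q + 1))"
    using True shift_le assms
    by (intro power_mono cos_le_of_arccos_sub_le cos_ge_zero) auto
  finally show ?thesis .
next
  case False
  then show ?thesis using assms by (simp add: sigma_pf_def)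
qed

section \<open>Gradients of smooth functions\<close>

lemma linear_eq_sum_Basis:
  fixes f :: "'a::euclidean_space \<Rightarrow> 'b::real_vector"
  assumes "linear f"
  shows "f v = (\<Sum>i\<in>Basis. (v \<bullet> i) *\<^sub>R f i)"
proof -
  have "f v = f (\<Sum>i\<in>Basis. (v \<bullet> i) *\<^sub>R i)" by (simp add: euclidean_representation)
  also have "\<dots> = (\<Sum>i\<in>Basis. (v \<bullet> i) *\<^sub>R f i)"
    using assms by (simp add: linear_sum linear_scale)
  finally show ?thesis .
qed

lemma norm_linear_le_sum_Basis:
  fixes f :: "'a::euclidean_space \<Rightarrow> 'b::real_normed_vector"
  assumes "linear f"
  shows "norm (f v) \<le> norm v * (\<Sum>i\<in>Basis. norm (f i))"
proof -
  have "norm (f v) \<le> (\<Sum>i\<in>Basis. norm ((v \<bullet> i) *\<^sub>R f i))"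
    unfolding linear_eq_sum_Basis[OF assms, of v] by (rule norm_sum)
  also have "\<dots> \<le> (\<Sum>i\<in>Basis. norm v * norm (f i))"
    by (intro sum_mono) (simp add: Basis_le_norm mult_right_mono)
  finally show ?thesis by (simp add: sum_distrib_left)
qed

lemma frechet_derivative_eq_grad_inner:
  fixes f :: "'a::euclidean_space \<Rightarrow> real"
  assumes "f differentiable (at x)"
  shows "frechet_derivative f (at x) = (\<lambda>v. grad f x \<bullet> v)"
proof
  fix v
  show "frechet_derivative f (at x) v = grad f x \<bullet> v"
    unfolding linear_eq_sum_Basis[OF linear_frechet_derivative[OF assms], of v] grad_def
    by (simp add: inner_sum_right inner_commute mult.commute)
qed

lemma has_derivative_grad:
  fixes f :: "'a::euclidean_space \<Rightarrow> real"
  assumes "f differentiable (at x)"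
  shows "(f has_derivative (\<lambda>v. grad f x \<bullet> v)) (at x)"
  using frechet_derivative_works[THEN iffD1, OF assms]
  unfolding frechet_derivative_eq_grad_inner[OF assms] .

lemma onorm_inner_left_le:
  fixes g :: "'a::euclidean_space"
  assumes "norm g \<le> B"
  shows "onorm (\<lambda>v. g \<bullet> v) \<le> B"
proof (rule onorm_le)
  fix v :: 'a
  have "norm (g \<bullet> v) \<le> norm g * norm v" using Cauchy_Schwarz_ineq2 by simp
  also have "\<dots> \<le> B * norm v" using assms by (simp add: mult_right_mono)
  finally show "norm (g \<bullet> v) \<le> B * norm v" .
qed

lemma lipschitz_on_convex_of_grad_bound:
  fixes f :: "'a::euclidean_space \<Rightarrow> real"
  assumes "convex T" "0 \<le> B"
    and "\<And>x. x \<in> T \<Longrightarrow> f differentiable (at x)"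
    and "\<And>x. x \<in> T \<Longrightarrow> norm (grad f x) \<le> B"
  shows "B-lipschitz_on T f"
  using assms
  by (intro bounded_derivative_imp_lipschitz[where f' = "\<lambda>x v. grad f x \<bullet> v"])
    (auto intro: has_derivative_at_withinI has_derivative_grad onorm_inner_left_le)

lemma smooth_on_iter_partial:
  assumes "smooth_on S f" "g \<in> iter_partials f"
  shows "continuous_on S g" "\<And>x. x \<in> S \<Longrightarrow> g differentiable (at x)"
  using assms unfolding smooth_on_def
  by (auto simp: differentiable_on_eq_differentiable_at)

lemma smooth_on_differentiable:
  assumes "smooth_on S f" "x \<in> S"
  shows "f differentiable (at x)"
  using smooth_on_iter_partial(2)[OF assms(1) iter_partials.base assms(2)] .

lemma has_derivative_grad_Hessian:
  fixes f :: "'a::euclidean_space \<Rightarrow> real"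
  assumes "smooth_on S f" "x \<in> S"
  shows "(grad f has_derivative blinfun_apply (blinfun_of_matrix
           (\<lambda>i j. frechet_derivative (\<lambda>y. frechet_derivative f (at y) i) (at x) j))) (at x)"
    (is "(_ has_derivative blinfun_apply ?H) _")
proof -
  have "((\<lambda>y. frechet_derivative f (at y) i) has_derivative
          frechet_derivative (\<lambda>y. frechet_derivative f (at y) i) (at x)) (at x)" if "i \<in> Basis" for i
    using smooth_on_iter_partial(2)[OF assms(1) iter_partials.step[OF iter_partials.base that] assms(2)]
    by (simp add: frechet_derivative_works)
  then have "(grad f has_derivative (\<lambda>v. \<Sum>i\<in>Basis.
      frechet_derivative (\<lambda>y. frechet_derivative f (at y) i) (at x) v *\<^sub>R i)) (at x)"
    unfolding grad_def[abs_def] by (intro has_derivative_sum has_derivative_scaleR_left) auto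
  moreover have "(\<lambda>v. \<Sum>i\<in>Basis. frechet_derivative (\<lambda>y. frechet_derivative f (at y) i) (at x) v *\<^sub>R i)
      = blinfun_apply ?H"
  proof
    fix v
    have "frechet_derivative (\<lambda>y. frechet_derivative f (at y) i) (at x) v
        = (\<Sum>j\<in>Basis. (v \<bullet> j) * frechet_derivative (\<lambda>y. frechet_derivative f (at y) i) (at x) j)"
      if "i \<in> Basis" for i
      using linear_eq_sum_Basis[OF linear_frechet_derivative, of "\<lambda>y. frechet_derivative f (at y) i" "at x" v]
        smooth_on_iter_partial(2)[OF assms(1) iter_partials.step[OF iter_partials.base that] assms(2)]
      by simp
    then show "(\<Sum>i\<in>Basis. frechet_derivative (\<lambda>y. frechet_derivative f (at y) i) (at x) v *\<^sub>R i)
        = blinfun_apply ?H v"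
      unfolding blinfun_of_matrix_apply by (simp add: scaleR_sum_left)
  qed
  ultimately show ?thesis by simp
qed

lemma lipschitz_on_compact_grad:
  fixes f :: "'a::euclidean_space \<Rightarrow> real"
  assumes "smooth_on S f" "compact K" "K \<subseteq> S"
  obtains L where "L-lipschitz_on K (grad f)"
proof -
  \<comment> \<open>The library's local Lipschitz theory is about time-dependent families; \<open>grad f\<close> is a constant one.\<close>
  define H where "H x = blinfun_of_matrix
             (\<lambda>i j. frechet_derivative (\<lambda>y. frechet_derivative f (at y) i) (at x) j)" for x
  have "continuous_on (UNIV \<times> S) (\<lambda>(t::real, x). H x)"
    unfolding H_def case_prod_beta
    by (intro continuous_intros continuous_on_compose2[OF smooth_on_iter_partial(1)[OF assms(1)]]
        iter_partials.step iter_partials.base) auto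
  then have "local_lipschitz (UNIV :: real set) S (\<lambda>_. grad f)"
    using assms(1) unfolding smooth_on_def
    by (intro c1_implies_local_lipschitz[where f' = "\<lambda>(t, x). H x"])
      (auto simp: H_def intro: has_derivative_grad_Hessian[OF assms(1)])
  then have "local_lipschitz {0::real} K (\<lambda>_. grad f)"
    by (rule local_lipschitz_subset[OF _ _ assms(3)]) auto
  then obtain L where "L-lipschitz_on K (grad f)"
    using assms(2) by (rule local_lipschitz_compact_implies_lipschitz) auto
  then show ?thesis by (rule that)
qed

section \<open>Integral curves\<close>

lemma has_real_derivative_norm_diff_sq:
  fixes y1 y2 :: "real \<Rightarrow> 'a::real_inner"
  assumes "(y1 has_vector_derivative v1) (at t)" "(y2 has_vector_derivative v2) (at t)"
  shows "((\<lambda>t. norm (y1 t - y2 t)^2) has_real_derivative 2 * ((y1 t - y2 t) \<bullet> (v1 - v2))) (at t)"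
proof -
  have "((\<lambda>t. y1 t - y2 t) has_vector_derivative (v1 - v2)) (at t)"
    using assms by (intro derivative_intros)
  then have "((\<lambda>t. (y1 t - y2 t) \<bullet> (y1 t - y2 t)) has_derivative
      (\<lambda>h. (y1 t - y2 t) \<bullet> h *\<^sub>R (v1 - v2) + h *\<^sub>R (v1 - v2) \<bullet> (y1 t - y2 t))) (at t)"
    unfolding has_vector_derivative_def by (intro has_derivative_inner)
  then have "((\<lambda>t. (y1 t - y2 t) \<bullet> (y1 t - y2 t)) has_derivative
      (\<lambda>h. 2 * ((y1 t - y2 t) \<bullet> (v1 - v2)) * h)) (at t)"
    by (simp add: inner_commute algebra_simps)
  then show ?thesis
    unfolding power2_norm_eq_inner has_field_derivative_def
    by (rule has_derivative_eq_rhs) (simp add: fun_eq_iff mult.commute)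
qed

lemma ode_solutions_dist_sq_le:
  fixes y1 y2 :: "real \<Rightarrow> 'a::real_inner" and f1 f2 :: "'a \<Rightarrow> 'a"
  assumes "0 \<le> s"
    and ode: "\<And>t. t \<in> {0..s} \<Longrightarrow> (y1 has_vector_derivative f1 (y1 t)) (at t) \<and>
                (y2 has_vector_derivative f2 (y2 t)) (at t) \<and> y1 t \<in> K \<and> y2 t \<in> K"
    and lip: "L-lipschitz_on K f1"
    and close: "\<And>u. u \<in> K \<Longrightarrow> norm (f1 u - f2 u) \<le> \<eta>"
  shows "norm (y1 s - y2 s)^2 \<le> (norm (y1 0 - y2 0)^2 + \<eta>^2 * s) * exp ((2 * L + 1) * s)"
proof -
  define c where "c = 2 * L + 1"
  have "0 \<le> c" using lipschitz_on_nonneg[OF lip] by (simp add: c_def)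
  define v where "v t = norm (y1 t - y2 t)^2" for t
  define v' where "v' t = 2 * ((y1 t - y2 t) \<bullet> (f1 (y1 t) - f2 (y2 t)))" for t
  have v_deriv: "(v has_real_derivative v' t) (at t)" if "t \<in> {0..s}" for t
    unfolding v_def v'_def using ode[OF that] by (intro has_real_derivative_norm_diff_sq) auto
  have v'_le: "v' t \<le> c * v t + \<eta>^2" if "t \<in> {0..s}" for t
  proof -
    define e where "e = y1 t - y2 t"
    have "norm (f1 (y1 t) - f2 (y2 t)) \<le> norm (f1 (y1 t) - f1 (y2 t)) + norm (f1 (y2 t) - f2 (y2 t))"
      using norm_triangle_ineq[of "f1 (y1 t) - f1 (y2 t)" "f1 (y2 t) - f2 (y2 t)"] by simp
    also have "\<dots> \<le> L * norm e + \<eta>"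
      using lipschitz_on_normD[OF lip] close ode[OF that] unfolding e_def by (intro add_mono) auto
    finally have "norm (f1 (y1 t) - f2 (y2 t)) \<le> L * norm e + \<eta>" .
    then have "v' t \<le> 2 * (norm e * (L * norm e + \<eta>))"
      unfolding v'_def e_def
      using norm_cauchy_schwarz[of "y1 t - y2 t" "f1 (y1 t) - f2 (y2 t)"]
        mult_left_mono[of _ _ "norm (y1 t - y2 t)"] by fastforce
    also have "\<dots> \<le> c * norm e ^ 2 + \<eta>^2"
      using sum_squares_bound[of "norm e" \<eta>] by (simp add: c_def algebra_simps power2_eq_square)
    finally show ?thesis unfolding v_def e_def .
  qed
  \<comment> \<open>Gronwall: \<open>v' \<le> c v + \<eta>^2\<close> makes \<open>v e^(-c t) - \<eta>^2 t\<close> nonincreasing.\<close>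
  define w where "w t = v t * exp (- c * t) - \<eta>^2 * t" for t
  have "w s \<le> w 0"
  proof (rule DERIV_nonpos_imp_nonincreasing[OF \<open>0 \<le> s\<close>])
    fix t assume t: "0 \<le> t" "t \<le> s"
    have "exp (- c * t) \<le> 1" using \<open>0 \<le> c\<close> t by simp
    have "v' t * exp (- c * t) \<le> (c * v t + \<eta>^2) * exp (- c * t)"
      using v'_le[of t] t by (intro mult_right_mono) auto
    also have "\<dots> \<le> c * v t * exp (- c * t) + \<eta>^2"
      using mult_left_le[OF \<open>exp (- c * t) \<le> 1\<close>, of "\<eta>^2"] by (simp add: distrib_right)
    finally have "v' t * exp (- c * t) \<le> c * v t * exp (- c * t) + \<eta>^2" .
    moreover have "(w has_real_derivative v' t * exp (- c * t) - c * v t * exp (- c * t) - \<eta>^2) (at t)"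
      unfolding w_def using t
      by (auto intro!: derivative_eq_intros v_deriv simp: algebra_simps)
    ultimately show "\<exists>y. (w has_real_derivative y) (at t) \<and> y \<le> 0" by force
  qed
  then have "v s \<le> (v 0 + \<eta>^2 * s) * exp (c * s)"
    by (simp add: w_def exp_minus field_simps)
  then show ?thesis unfolding v_def c_def .
qed

lemma ode_solutions_dist_sq_le_abs:
  fixes y1 y2 :: "real \<Rightarrow> 'a::real_inner" and f1 f2 :: "'a \<Rightarrow> 'a"
  assumes ode: "\<And>t. \<bar>t\<bar> \<le> \<bar>s\<bar> \<Longrightarrow> (y1 has_vector_derivative f1 (y1 t)) (at t) \<and>
                (y2 has_vector_derivative f2 (y2 t)) (at t) \<and> y1 t \<in> K \<and> y2 t \<in> K"
    and lip: "L-lipschitz_on K f1"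
    and close: "\<And>u. u \<in> K \<Longrightarrow> norm (f1 u - f2 u) \<le> \<eta>"
  shows "norm (y1 s - y2 s)^2 \<le> (norm (y1 0 - y2 0)^2 + \<eta>^2 * \<bar>s\<bar>) * exp ((2 * L + 1) * \<bar>s\<bar>)"
proof (cases "0 \<le> s")
  case True
  then show ?thesis
    using ode_solutions_dist_sq_le[OF True _ lip close] ode by auto
next
  case False
  \<comment> \<open>Reversing time negates both vector fields.\<close>
  have mirror: "((\<lambda>t. y (- t)) has_vector_derivative - f (y (- t))) (at t)"
    if "(y has_vector_derivative f (y (- t))) (at (- t))" for y :: "real \<Rightarrow> 'a" and f t
  proof -
    have "((\<lambda>x::real. - x) has_vector_derivative -1) (at t)"
      unfolding has_real_derivative_iff_has_vector_derivative[symmetric]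
      by (auto intro!: derivative_eq_intros)
    from vector_diff_chain_at[OF this that] show ?thesis by (simp add: o_def)
  qed
  have "norm (y1 (- (- s)) - y2 (- (- s)))^2
      \<le> (norm (y1 (- 0) - y2 (- 0))^2 + \<eta>^2 * (- s)) * exp ((2 * L + 1) * (- s))"
  proof (rule ode_solutions_dist_sq_le[where ?f1.0 = "\<lambda>u. - f1 u" and ?f2.0 = "\<lambda>u. - f2 u" and K = K])
    fix t assume "t \<in> {0..- s}"
    then show "((\<lambda>t. y1 (- t)) has_vector_derivative - f1 (y1 (- t))) (at t) \<and>
        ((\<lambda>t. y2 (- t)) has_vector_derivative - f2 (y2 (- t))) (at t) \<and> y1 (- t) \<in> K \<and> y2 (- t) \<in> K"
      using ode[of "- t"] mirror[of y1 f1 t] mirror[of y2 f2 t] False by auto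
  qed (use False lip close in \<open>auto simp: norm_minus_commute\<close>)
  then show ?thesis using False by simp
qed

lemma norm_diff_le_of_vector_derivative_bound:
  fixes c :: "real \<Rightarrow> 'a::real_normed_vector"
  assumes "convex I"
    and "\<And>t. t \<in> I \<Longrightarrow> (c has_vector_derivative v t) (at t) \<and> norm (v t) \<le> M"
    and "s \<in> I" "t \<in> I"
  shows "norm (c t - c s) \<le> M * \<bar>t - s\<bar>"
proof -
  have "norm (c t - c s) \<le> M * norm (t - s)"
  proof (rule differentiable_bound[of I c "\<lambda>t h. h *\<^sub>R v t"])
    fix x assume x: "x \<in> I"
    then show "(c has_derivative (\<lambda>h. h *\<^sub>R v x)) (at x within I)"
      using assms(2) unfolding has_vector_derivative_def by (blast intro: has_derivative_at_withinI)
    show "onorm (\<lambda>h. h *\<^sub>R v x) \<le> M"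
    proof (rule onorm_le)
      fix h :: real
      show "norm (h *\<^sub>R v x) \<le> M * norm h"
        using conjunct2[OF assms(2)[OF x]] by (simp add: mult.commute[of M] mult_left_mono)
    qed
  qed (use assms in auto)
  then show ?thesis by simp
qed

lemma continuous_on_flow:
  fixes \<gamma> :: "'a::real_inner \<Rightarrow> real \<Rightarrow> 'a" and F :: "'a \<Rightarrow> 'a \<Rightarrow> 'a"
  assumes init: "\<And>p. p \<in> \<Gamma> \<Longrightarrow> \<gamma> p 0 = p"
    and ode: "\<And>p t. p \<in> \<Gamma> \<Longrightarrow> t \<in> {-\<delta><..<\<delta>} \<Longrightarrow>
                (\<gamma> p has_vector_derivative F p (\<gamma> p t)) (at t) \<and> \<gamma> p t \<in> K"
    and bounded: "\<And>p y. p \<in> \<Gamma> \<Longrightarrow> y \<in> K \<Longrightarrow> norm (F p y) \<le> M"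
    and lip: "\<And>p. p \<in> \<Gamma> \<Longrightarrow> L-lipschitz_on K (F p)"
    and dep: "\<And>p q y. p \<in> \<Gamma> \<Longrightarrow> q \<in> \<Gamma> \<Longrightarrow> y \<in> K \<Longrightarrow> norm (F p y - F q y) \<le> \<omega> p q"
    and \<omega>: "\<And>p. p \<in> \<Gamma> \<Longrightarrow> continuous_on \<Gamma> (\<omega> p) \<and> \<omega> p p = 0"
  shows "continuous_on (\<Gamma> \<times> {-\<delta><..<\<delta>}) (\<lambda>(p, s). \<gamma> p s)"
  unfolding continuous_on_def
proof (intro ballI, clarify)
  fix p s assume p: "p \<in> \<Gamma>" and s: "s \<in> {-\<delta><..<\<delta>}"
  define I where "I = {-\<delta><..<\<delta>}"
  define b where "b z = M * \<bar>snd z - s\<bar> +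
      sqrt ((dist (fst z) p ^ 2 + \<omega> p (fst z) ^ 2 * \<bar>s\<bar>) * exp ((2 * L + 1) * \<bar>s\<bar>))" for z
  have "continuous_on (\<Gamma> \<times> I) b"
    unfolding b_def
    by (intro continuous_intros continuous_on_compose2[OF conjunct1[OF \<omega>[OF p]]]) auto
  moreover have "b (p, s) = 0" using \<omega>[OF p] by (simp add: b_def)
  ultimately have b_lim: "(b \<longlongrightarrow> 0) (at (p, s) within \<Gamma> \<times> I)"
    using p s unfolding continuous_on_def I_def by force
  have time_lip: "norm (\<gamma> q t - \<gamma> q s) \<le> M * \<bar>t - s\<bar>" if q: "q \<in> \<Gamma>" and t: "t \<in> I" for q t
    using ode[OF q] bounded[OF q] s t unfolding I_def
    by (intro norm_diff_le_of_vector_derivative_bound[where I = "{-\<delta><..<\<delta>}"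
          and v = "\<lambda>t. F q (\<gamma> q t)"]) auto
  have init_dep: "norm (\<gamma> q s - \<gamma> p s)
      \<le> sqrt ((dist q p ^ 2 + \<omega> p q ^ 2 * \<bar>s\<bar>) * exp ((2 * L + 1) * \<bar>s\<bar>))" if q: "q \<in> \<Gamma>" for q
  proof (rule real_le_rsqrt)
    have "norm (\<gamma> p s - \<gamma> q s)^2
        \<le> (norm (\<gamma> p 0 - \<gamma> q 0)^2 + \<omega> p q ^ 2 * \<bar>s\<bar>) * exp ((2 * L + 1) * \<bar>s\<bar>)"
    proof (rule ode_solutions_dist_sq_le_abs[OF _ lip[OF p] dep[OF p q]])
      fix t assume "\<bar>t\<bar> \<le> \<bar>s\<bar>"
      then have "t \<in> {-\<delta><..<\<delta>}" using s by auto
      then show "(\<gamma> p has_vector_derivative F p (\<gamma> p t)) (at t) \<and>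
          (\<gamma> q has_vector_derivative F q (\<gamma> q t)) (at t) \<and> \<gamma> p t \<in> K \<and> \<gamma> q t \<in> K"
        using ode[OF p] ode[OF q] by blast
    qed
    then show "norm (\<gamma> q s - \<gamma> p s)^2
        \<le> (dist q p ^ 2 + \<omega> p q ^ 2 * \<bar>s\<bar>) * exp ((2 * L + 1) * \<bar>s\<bar>)"
      using init p q by (simp add: dist_norm norm_minus_commute)
  qed
  have "norm (\<gamma> q t - \<gamma> p s) \<le> b (q, t)" if "q \<in> \<Gamma>" "t \<in> I" for q t
    using norm_triangle_ineq[of "\<gamma> q t - \<gamma> q s" "\<gamma> q s - \<gamma> p s"] time_lip[OF that] init_dep[OF that(1)]
    by (simp add: b_def)
  then have "\<forall>\<^sub>F z in at (p, s) within \<Gamma> \<times> I. norm (\<gamma> (fst z) (snd z) - \<gamma> p s) \<le> b z"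
    unfolding eventually_at_filter by (intro always_eventually) auto
  then have "((\<lambda>z. \<gamma> (fst z) (snd z) - \<gamma> p s) \<longlongrightarrow> 0) (at (p, s) within \<Gamma> \<times> I)"
    by (rule Lim_null_comparison[OF _ b_lim])
  then show "((\<lambda>(p, s). \<gamma> p s) \<longlongrightarrow> \<gamma> p s) (at (p, s) within \<Gamma> \<times> {-\<delta><..<\<delta>})"
    unfolding I_def case_prod_beta by (simp add: Lim_null[symmetric])
qed

lemma level_along_integral_curve:
  fixes c :: "real \<Rightarrow> 'a::euclidean_space" and \<phi> :: "'a \<Rightarrow> real"
  assumes curve: "\<And>t. t \<in> {-\<delta><..<\<delta>} \<Longrightarrow> (c has_vector_derivative v t) (at t) \<and>
                    \<phi> differentiable (at (c t)) \<and> grad \<phi> (c t) \<bullet> v t = 1"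
    and "\<phi> (c 0) = 0" and s: "s \<in> {-\<delta><..<\<delta>}"
  shows "\<phi> (c s) = s"
proof -
  have "((\<lambda>t. \<phi> (c t) - t) has_field_derivative 0) (at t within {-\<delta><..<\<delta>})"
    if t: "t \<in> {-\<delta><..<\<delta>}" for t
  proof -
    have "((\<lambda>t. \<phi> (c t)) has_derivative (\<lambda>h. h)) (at t)"
      using diff_chain_at[OF curve[OF t, THEN conjunct1, unfolded has_vector_derivative_def]
          has_derivative_grad[of \<phi>]] curve[OF t] by (simp add: o_def)
    then have "((\<lambda>t. \<phi> (c t) - t) has_derivative (\<lambda>h. 0)) (at t)"
      using has_derivative_diff[OF _ has_derivative_ident] by fastforce
    moreover have "(*) (0::real) = (\<lambda>h. 0)" by auto
    ultimately show ?thesis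
      unfolding has_field_derivative_def by (simp add: has_derivative_at_withinI)
  qed
  moreover have "convex {-\<delta><..<\<delta>}" by simp
  ultimately obtain k where "\<forall>t\<in>{-\<delta><..<\<delta>}. \<phi> (c t) - t = k"
    using has_field_derivative_zero_constant by blast
  moreover have "0 \<in> {-\<delta><..<\<delta>}" using s by auto
  ultimately have "k = 0" using \<open>\<phi> (c 0) = 0\<close> by force
  then show ?thesis using \<open>\<forall>t\<in>{-\<delta><..<\<delta>}. \<phi> (c t) - t = k\<close> s by force
qed

lemma closure_inter_band_subset:
  fixes g :: "'c::topological_space \<times> real \<Rightarrow> 'a::t2_space" and \<phi> :: "'a \<Rightarrow> real"
  assumes "compact \<Gamma>" "open S" "closure \<Omega> \<subseteq> S" "continuous_on S \<phi>"
    and g_cont: "continuous_on (\<Gamma> \<times> {-\<delta><..<\<delta>}) g"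
    and g_onto: "g ` (\<Gamma> \<times> {-\<delta><..<\<delta>}) = U_nbhd \<Omega> \<phi> \<delta>"
    and g_level: "\<And>p s. p \<in> \<Gamma> \<Longrightarrow> s \<in> {-\<delta><..<\<delta>} \<Longrightarrow> \<phi> (g (p, s)) = s"
    and x: "x \<in> closure \<Omega>" "\<bar>\<phi> x\<bar> < \<delta>"
  shows "x \<in> \<Omega>"
proof -
  define d where "d = (\<bar>\<phi> x\<bar> + \<delta>) / 2"
  have d: "\<bar>\<phi> x\<bar> < d" "d < \<delta>" using x by (auto simp: d_def)
  define V where "V = \<phi> -` {-d<..<d} \<inter> S"
  have "open V"
    unfolding V_def
    using continuous_on_open_vimage[OF assms(2)] assms(4) open_greaterThanLessThan by blast
  have "x \<in> V" using x d assms(3) by (auto simp: V_def)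
  have "V \<inter> \<Omega> \<subseteq> g ` (\<Gamma> \<times> {-d..d})"
  proof
    fix z assume z: "z \<in> V \<inter> \<Omega>"
    then have "z \<in> U_nbhd \<Omega> \<phi> \<delta>" using d by (auto simp: V_def U_nbhd_def)
    then obtain p s where ps: "p \<in> \<Gamma>" "s \<in> {-\<delta><..<\<delta>}" "z = g (p, s)"
      unfolding g_onto[symmetric] by auto
    then have "\<phi> z = s" using g_level by simp
    then have "(p, s) \<in> \<Gamma> \<times> {-d..d}" using z ps(1) by (simp add: V_def)
    then show "z \<in> g ` (\<Gamma> \<times> {-d..d})" using ps(3) by (rule rev_image_eqI)
  qed
  moreover have "compact (g ` (\<Gamma> \<times> {-d..d}))"
    using d by (intro compact_continuous_image continuous_on_subset[OF g_cont] compact_Times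
        \<open>compact \<Gamma>\<close>) auto
  ultimately have "closure (V \<inter> \<Omega>) \<subseteq> g ` (\<Gamma> \<times> {-d..d})"
    by (intro closure_minimal compact_imp_closed)
  moreover have "x \<in> closure (V \<inter> \<Omega>)"
    using open_Int_closure_subset[OF \<open>open V\<close>] \<open>x \<in> V\<close> x(1) by blast
  moreover have "g ` (\<Gamma> \<times> {-d..d}) \<subseteq> U_nbhd \<Omega> \<phi> \<delta>"
    unfolding g_onto[symmetric] using d by (intro image_mono) auto
  ultimately have "x \<in> U_nbhd \<Omega> \<phi> \<delta>" by blast
  then show ?thesis by (simp add: U_nbhd_def)
qed

section \<open>The normalized field \<open>A\<nabla>\<phi> / (A\<nabla>\<phi> \<cdot> \<nabla>\<phi>)\<close>\<close>

lemma norm_scaled_by_inner_diff_le: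
  fixes a1 a2 g1 g2 :: "'a::real_inner"
  assumes "norm g1 \<le> c" "norm a2 \<le> N" "m \<le> a1 \<bullet> g1" "m \<le> a2 \<bullet> g2" "0 < m"
  shows "norm (a1 /\<^sub>R (a1 \<bullet> g1) - a2 /\<^sub>R (a2 \<bullet> g2))
    \<le> norm (a1 - a2) / m + N * (norm (a1 - a2) * c + N * norm (g1 - g2)) / m^2"
proof -
  define D1 D2 where "D1 = a1 \<bullet> g1" and "D2 = a2 \<bullet> g2"
  have D: "0 < D1" "0 < D2" "m^2 \<le> D1 * D2"
    using assms by (auto simp: D1_def D2_def power2_eq_square intro: mult_mono)
  have "\<bar>D1 - D2\<bar> = \<bar>(a1 - a2) \<bullet> g1 + a2 \<bullet> (g1 - g2)\<bar>"
    by (simp add: D1_def D2_def inner_diff_left inner_diff_right)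
  also have "\<dots> \<le> norm (a1 - a2) * norm g1 + norm a2 * norm (g1 - g2)"
    by (intro order_trans[OF abs_triangle_ineq] add_mono Cauchy_Schwarz_ineq2)
  also have "\<dots> \<le> norm (a1 - a2) * c + N * norm (g1 - g2)"
    using assms by (intro add_mono mult_left_mono mult_right_mono) auto
  finally have D_diff: "\<bar>D1 - D2\<bar> \<le> norm (a1 - a2) * c + N * norm (g1 - g2)" .
  have inverse_diff_D: "\<bar>1 / D1 - 1 / D2\<bar> = \<bar>D1 - D2\<bar> / (D1 * D2)"
    using D by (simp add: field_simps abs_minus_commute)
  have "norm (a1 /\<^sub>R D1 - a2 /\<^sub>R D2) = norm ((a1 - a2) /\<^sub>R D1 + (1 / D1 - 1 / D2) *\<^sub>R a2)"
    by (simp add: algebra_simps divide_inverse)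
  also have "\<dots> \<le> norm ((a1 - a2) /\<^sub>R D1) + norm ((1 / D1 - 1 / D2) *\<^sub>R a2)"
    by (rule norm_triangle_ineq)
  also have "\<dots> = norm (a1 - a2) / D1 + \<bar>D1 - D2\<bar> / (D1 * D2) * norm a2"
    using D inverse_diff_D by (simp add: divide_inverse_commute)
  also have "\<dots> \<le> norm (a1 - a2) / m + (norm (a1 - a2) * c + N * norm (g1 - g2)) / m^2 * N"
    using D D_diff assms
    by (intro add_mono divide_left_mono mult_mono frac_le) (auto simp: D1_def)
  finally show ?thesis by (simp add: D1_def D2_def algebra_simps)
qed

lemma continuous_on_compact_pos_lower_bound:
  fixes f :: "'a::topological_space \<Rightarrow> real"
  assumes "compact X" "continuous_on X f" "\<And>x. x \<in> X \<Longrightarrow> 0 < f x"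
  obtains m where "0 < m" "\<And>x. x \<in> X \<Longrightarrow> m \<le> f x"
proof (cases "X = {}")
  case True
  then show ?thesis using that[of 1] by simp
next
  case False
  then obtain x0 where "x0 \<in> X" "\<And>x. x \<in> X \<Longrightarrow> f x0 \<le> f x"
    using continuous_attains_inf[OF assms(1) _ assms(2)] by blast
  then show ?thesis using that[of "f x0"] assms(3) by blast
qed

lemma linear_family_operator_bound:
  fixes A :: "'b::topological_space \<Rightarrow> 'a::euclidean_space \<Rightarrow> 'c::real_normed_vector"
  assumes "compact \<Gamma>" "\<forall>p\<in>\<Gamma>. linear (A p)" "continuous_on \<Gamma> (\<lambda>p. A p)"
  obtains N where "0 \<le> N" "\<And>p v. p \<in> \<Gamma> \<Longrightarrow> norm (A p v) \<le> N * norm v"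
proof -
  have "continuous_on \<Gamma> (\<lambda>p. \<Sum>i\<in>Basis. norm (A p i))"
    by (intro continuous_intros continuous_on_product_then_coordinatewise[OF assms(3)])
  then obtain N where N: "0 \<le> N" "\<And>p. p \<in> \<Gamma> \<Longrightarrow> norm (\<Sum>i\<in>Basis. norm (A p i)) \<le> N"
    using continuous_on_compact_bound[OF assms(1)] by blast
  have "norm (A p v) \<le> N * norm v" if "p \<in> \<Gamma>" for p v
  proof -
    have "norm (A p v) \<le> norm v * (\<Sum>i\<in>Basis. norm (A p i))"
      using assms(2) that by (intro norm_linear_le_sum_Basis) auto
    also have "\<dots> \<le> norm v * N"
      using N(2)[OF that] by (intro mult_left_mono) auto
    finally show ?thesis by (simp add: mult.commute)
  qed
  then show ?thesis using that N(1) by blast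
qed

lemma continuous_on_linear_family_apply:
  fixes A :: "'b::topological_space \<Rightarrow> 'a::euclidean_space \<Rightarrow> 'c::real_normed_vector"
  assumes "\<forall>p\<in>\<Gamma>. linear (A p)" "continuous_on \<Gamma> (\<lambda>p. A p)"
  shows "continuous_on (\<Gamma> \<times> UNIV) (\<lambda>(p, v). A p v)"
proof -
  have cont: "continuous_on (\<Gamma> \<times> UNIV) (\<lambda>(p, v). \<Sum>i\<in>Basis. (v \<bullet> i) *\<^sub>R A p i)"
    unfolding case_prod_beta
    by (intro continuous_intros continuous_on_compose2[OF
          continuous_on_product_then_coordinatewise[OF assms(2)]]) auto
  have eq: "(\<Sum>i\<in>Basis. (v \<bullet> i) *\<^sub>R A p i) = A p v" if "p \<in> \<Gamma>" for p v
    using linear_eq_sum_Basis[of "A p" v] assms(1) that by simp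
  show ?thesis by (rule continuous_on_eq[OF cont]) (auto simp: eq)
qed

lemma norm_normalized_field_diff_le:
  fixes B1 B2 :: "'a::euclidean_space \<Rightarrow> 'a"
  assumes B_lin: "linear B1" "linear B2" and B_bound: "\<And>v. norm (B1 v) \<le> N * norm v"
      "\<And>v. norm (B2 v) \<le> N * norm v" "0 \<le> N"
    and g: "norm g1 \<le> c" "norm g2 \<le> c" "norm (g1 - g2) \<le> LG * d" "0 \<le> LG" "0 \<le> d"
    and m: "m \<le> B1 g1 \<bullet> g1" "m \<le> B2 g2 \<bullet> g2" "0 < m"
  shows "norm (B1 g1 /\<^sub>R (B1 g1 \<bullet> g1) - B2 g2 /\<^sub>R (B2 g2 \<bullet> g2))
    \<le> ((N * LG + c) / m + N * c * ((N * LG + c) * c + N * c * LG) / m^2)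
        * (d + (\<Sum>i\<in>Basis. norm (B1 i - B2 i)))"
proof -
  define dB where "dB = (\<Sum>i\<in>Basis. norm (B1 i - B2 i))"
  have "0 \<le> c" using norm_ge_zero[of g1] g(1) by linarith
  have "0 \<le> dB" by (simp add: dB_def sum_nonneg)
  have "norm (B1 g1 - B2 g2) \<le> norm (B1 (g1 - g2)) + norm (B1 g2 - B2 g2)"
    using B_lin norm_triangle_ineq[of "B1 (g1 - g2)" "B1 g2 - B2 g2"] by (simp add: linear_diff)
  also have "\<dots> \<le> N * (LG * d) + c * dB"
  proof (rule add_mono)
    show "norm (B1 (g1 - g2)) \<le> N * (LG * d)"
      using B_bound(1)[of "g1 - g2"] g(3) B_bound(3) by (meson mult_left_mono order_trans)
    have "norm (B1 g2 - B2 g2) \<le> norm g2 * dB"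
      unfolding dB_def using B_lin
      by (intro norm_linear_le_sum_Basis[of "\<lambda>v. B1 v - B2 v", simplified] linear_compose_sub)
    also have "\<dots> \<le> c * dB" using g(2) \<open>0 \<le> dB\<close> by (rule mult_right_mono)
    finally show "norm (B1 g2 - B2 g2) \<le> c * dB" .
  qed
  also have "\<dots> \<le> (N * LG + c) * (d + dB)"
    using mult_nonneg_nonneg[OF mult_nonneg_nonneg[OF B_bound(3) g(4)] \<open>0 \<le> dB\<close>]
      mult_nonneg_nonneg[OF \<open>0 \<le> c\<close> g(5)] by (simp add: algebra_simps)
  finally have B_diff: "norm (B1 g1 - B2 g2) \<le> (N * LG + c) * (d + dB)" .
  have "norm (B2 g2) \<le> N * c"
    using B_bound(2)[of g2] g(2) B_bound(3) by (meson mult_left_mono order_trans)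
  have "norm (B1 g1 /\<^sub>R (B1 g1 \<bullet> g1) - B2 g2 /\<^sub>R (B2 g2 \<bullet> g2))
      \<le> norm (B1 g1 - B2 g2) / m + N * c * (norm (B1 g1 - B2 g2) * c + N * c * norm (g1 - g2)) / m^2"
    using norm_scaled_by_inner_diff_le[OF g(1) \<open>norm (B2 g2) \<le> N * c\<close> m] .
  also have "\<dots> \<le> (N * LG + c) * (d + dB) / m
      + N * c * ((N * LG + c) * (d + dB) * c + N * c * (LG * (d + dB))) / m^2"
    using B_diff g(3-5) B_bound(3) \<open>0 \<le> c\<close> \<open>0 \<le> dB\<close> m(3)
    by (intro add_mono divide_right_mono mult_left_mono mult_right_mono order_trans[OF g(3)]) auto
  also have "\<dots> = ((N * LG + c) / m + N * c * ((N * LG + c) * c + N * c * LG) / m^2) * (d + dB)"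
    by (simp add: algebra_simps add_divide_distrib)
  finally show ?thesis unfolding dB_def .
qed

lemma normalized_field_estimates:
  fixes A :: "'b::topological_space \<Rightarrow> 'a::euclidean_space \<Rightarrow> 'a" and G :: "'a \<Rightarrow> 'a"
  assumes "compact \<Gamma>" "compact K"
    and A_lin: "\<forall>p\<in>\<Gamma>. linear (A p)" and A_cont: "continuous_on \<Gamma> (\<lambda>p. A p)"
    and A_pd: "\<forall>p\<in>\<Gamma>. \<forall>x. x \<noteq> 0 \<longrightarrow> A p x \<bullet> x > 0"
    and G_lip: "LG-lipschitz_on K G" and G_ne: "\<forall>y\<in>K. G y \<noteq> 0"
  obtains C M where "0 \<le> C"
    "\<And>p y. p \<in> \<Gamma> \<Longrightarrow> y \<in> K \<Longrightarrow> norm (A p (G y) /\<^sub>R (A p (G y) \<bullet> G y)) \<le> M"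
    "\<And>p q y z. p \<in> \<Gamma> \<Longrightarrow> q \<in> \<Gamma> \<Longrightarrow> y \<in> K \<Longrightarrow> z \<in> K \<Longrightarrow>
       norm (A p (G y) /\<^sub>R (A p (G y) \<bullet> G y) - A q (G z) /\<^sub>R (A q (G z) \<bullet> G z))
         \<le> C * (dist y z + (\<Sum>i\<in>Basis. norm (A p i - A q i)))"
proof -
  obtain N where N: "0 \<le> N" "\<And>p v. p \<in> \<Gamma> \<Longrightarrow> norm (A p v) \<le> N * norm v"
    using linear_family_operator_bound[OF assms(1) A_lin A_cont] by blast
  have G_cont: "continuous_on K G" using G_lip by (rule lipschitz_on_continuous_on)
  obtain c where c: "0 \<le> c" "\<And>y. y \<in> K \<Longrightarrow> norm (G y) \<le> c"
    using continuous_on_compact_bound[OF assms(2) G_cont] by blast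
  have "continuous_on (\<Gamma> \<times> K) (\<lambda>z. A (fst z) (G (snd z)) \<bullet> G (snd z))"
    by (intro continuous_intros continuous_on_compose2[OF G_cont]
        continuous_on_compose2[OF continuous_on_linear_family_apply[OF A_lin A_cont],
          of _ "\<lambda>z. (fst z, G (snd z))", simplified]) auto
  moreover have "0 < A (fst z) (G (snd z)) \<bullet> G (snd z)" if "z \<in> \<Gamma> \<times> K" for z
    using that A_pd G_ne by (auto simp: mem_Times_iff)
  ultimately obtain m where
    "0 < m" "\<And>z. z \<in> \<Gamma> \<times> K \<Longrightarrow> m \<le> A (fst z) (G (snd z)) \<bullet> G (snd z)"
    using continuous_on_compact_pos_lower_bound[OF compact_Times[OF assms(1,2)]] by blast
  then have m: "0 < m" "\<And>p y. p \<in> \<Gamma> \<Longrightarrow> y \<in> K \<Longrightarrow> m \<le> A p (G y) \<bullet> G y"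
    by force+
  show ?thesis
  proof
    show "0 \<le> (N * LG + c) / m + N * c * ((N * LG + c) * c + N * c * LG) / m^2"
      using N(1) c(1) m(1) lipschitz_on_nonneg[OF G_lip] by simp
  next
    fix p y assume py: "p \<in> \<Gamma>" "y \<in> K"
    have "norm (A p (G y)) \<le> N * c"
      using N(2)[OF py(1), of "G y"] c(2)[OF py(2)] N(1) by (meson mult_left_mono order_trans)
    then have "norm (A p (G y)) / (A p (G y) \<bullet> G y) \<le> N * c / m"
      using m(1) m(2)[OF py] N(1) c(1) by (intro frac_le) auto
    then show "norm (A p (G y) /\<^sub>R (A p (G y) \<bullet> G y)) \<le> N * c / m"
      using m(1) m(2)[OF py] by (simp add: divide_inverse_commute)
  next
    fix p q y z assume "p \<in> \<Gamma>" "q \<in> \<Gamma>" "y \<in> K" "z \<in> K"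
    then show "norm (A p (G y) /\<^sub>R (A p (G y) \<bullet> G y) - A q (G z) /\<^sub>R (A q (G z) \<bullet> G z))
        \<le> ((N * LG + c) / m + N * c * ((N * LG + c) * c + N * c * LG) / m^2)
          * (dist y z + (\<Sum>i\<in>Basis. norm (A p i - A q i)))"
      using A_lin N c m lipschitz_on_nonneg[OF G_lip] lipschitz_on_normD[OF G_lip]
      by (intro norm_normalized_field_diff_le) (auto simp: dist_norm)
  qed
qed

lemma closure_inter_band_subset_of_flow:
  fixes \<Gamma> \<Omega> :: "'a::euclidean_space set" and \<phi> :: "'a \<Rightarrow> real"
    and A :: "'a \<Rightarrow> 'a \<Rightarrow> 'a" and \<gamma> :: "'a \<Rightarrow> real \<Rightarrow> 'a"
  assumes "bounded \<Omega>" and S: "closure \<Omega> \<subseteq> S" "smooth_on S \<phi>"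
    and \<Gamma>_def: "\<Gamma> = {x\<in>\<Omega>. \<phi> x = 0}" and "compact \<Gamma>"
    and grad_ne: "\<And>x. x \<in> closure \<Omega> \<Longrightarrow> grad \<phi> x \<noteq> 0"
    and A_lin: "\<forall>p\<in>\<Gamma>. linear (A p)" and A_cont: "continuous_on \<Gamma> (\<lambda>p. A p)"
    and A_pd: "\<forall>p\<in>\<Gamma>. \<forall>x. x \<noteq> 0 \<longrightarrow> A p x \<bullet> x > 0"
    and flow: "\<forall>p\<in>\<Gamma>. \<gamma> p 0 = p \<and>
          (\<forall>s\<in>{-\<delta><..<\<delta>}. \<gamma> p s \<in> closure \<Omega> \<and>
             (\<gamma> p has_vector_derivative
                (A p (grad \<phi> (\<gamma> p s)) /\<^sub>R (A p (grad \<phi> (\<gamma> p s)) \<bullet> grad \<phi> (\<gamma> p s)))) (at s))"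
    and onto: "(\<lambda>(p, s). \<gamma> p s) ` (\<Gamma> \<times> {-\<delta><..<\<delta>}) = U_nbhd \<Omega> \<phi> \<delta>"
    and x: "x \<in> closure \<Omega>" "\<bar>\<phi> x\<bar> < \<delta>"
  shows "x \<in> \<Omega>"
proof -
  define K where "K = closure \<Omega>"
  define F where "F p y = A p (grad \<phi> y) /\<^sub>R (A p (grad \<phi> y) \<bullet> grad \<phi> y)" for p y
  have "compact K" unfolding K_def using \<open>bounded \<Omega>\<close> by (rule compact_closure[THEN iffD2])
  obtain LG where LG: "LG-lipschitz_on K (grad \<phi>)"
    using lipschitz_on_compact_grad[OF S(2) \<open>compact K\<close>] S(1) unfolding K_def by blast
  have grad_ne_K: "\<forall>y\<in>K. grad \<phi> y \<noteq> 0" using grad_ne by (simp add: K_def)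
  obtain C M where C: "0 \<le> C"
    and F_bound: "\<And>p y. p \<in> \<Gamma> \<Longrightarrow> y \<in> K \<Longrightarrow> norm (F p y) \<le> M"
    and F_diff: "\<And>p q y z. p \<in> \<Gamma> \<Longrightarrow> q \<in> \<Gamma> \<Longrightarrow> y \<in> K \<Longrightarrow> z \<in> K \<Longrightarrow>
       norm (F p y - F q z) \<le> C * (dist y z + (\<Sum>i\<in>Basis. norm (A p i - A q i)))"
    by (rule normalized_field_estimates[OF \<open>compact \<Gamma>\<close> \<open>compact K\<close> A_lin A_cont A_pd LG grad_ne_K])
      (rule that[unfolded F_def])
  have ode: "(\<gamma> p has_vector_derivative F p (\<gamma> p t)) (at t) \<and> \<gamma> p t \<in> K"
    if "p \<in> \<Gamma>" "t \<in> {-\<delta><..<\<delta>}" for p t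
    using flow that unfolding F_def K_def by blast
  have "continuous_on (\<Gamma> \<times> {-\<delta><..<\<delta>}) (\<lambda>(p, s). \<gamma> p s)"
  proof (rule continuous_on_flow[where K = K and F = F and M = M and L = C
        and \<omega> = "\<lambda>p q. C * (\<Sum>i\<in>Basis. norm (A p i - A q i))"])
    fix p assume p: "p \<in> \<Gamma>"
    show "C-lipschitz_on K (F p)"
      using F_diff[OF p p] C by (intro lipschitz_onI) (auto simp: dist_norm)
    show "continuous_on \<Gamma> (\<lambda>q. C * (\<Sum>i\<in>Basis. norm (A p i - A q i))) \<and>
        C * (\<Sum>i\<in>Basis. norm (A p i - A p i)) = 0"
      by (auto intro!: continuous_intros continuous_on_product_then_coordinatewise[OF A_cont])
  next
    fix p q y assume "p \<in> \<Gamma>" "q \<in> \<Gamma>" "y \<in> K"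
    then show "norm (F p y - F q y) \<le> C * (\<Sum>i\<in>Basis. norm (A p i - A q i))"
      using F_diff[of p q y y] by simp
  qed (use flow ode F_bound in auto)
  moreover have "\<phi> ((\<lambda>(p, s). \<gamma> p s) (p, s)) = s" if "p \<in> \<Gamma>" "s \<in> {-\<delta><..<\<delta>}" for p s
  proof (simp, rule level_along_integral_curve[where c = "\<gamma> p" and v = "\<lambda>t. F p (\<gamma> p t)", OF _ _ that(2)])
    fix t assume t: "t \<in> {-\<delta><..<\<delta>}"
    have "A p (grad \<phi> (\<gamma> p t)) \<bullet> grad \<phi> (\<gamma> p t) \<noteq> 0"
      using A_pd grad_ne ode[OF that(1) t] that(1) unfolding K_def by (metis less_irrefl)
    then show "(\<gamma> p has_vector_derivative F p (\<gamma> p t)) (at t) \<and>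
        \<phi> differentiable (at (\<gamma> p t)) \<and> grad \<phi> (\<gamma> p t) \<bullet> F p (\<gamma> p t) = 1"
      using ode[OF that(1) t] smooth_on_differentiable[OF S(2)] S(1)
      by (auto simp: F_def K_def inner_commute)
  next
    show "\<phi> (\<gamma> p 0) = 0" using flow that(1) \<Gamma>_def by simp
  qed
  moreover have "continuous_on S \<phi>"
    using smooth_on_iter_partial(1)[OF S(2) iter_partials.base] .
  moreover have "open S" using S(2) by (simp add: smooth_on_def)
  ultimately show ?thesis
    using closure_inter_band_subset[OF \<open>compact \<Gamma>\<close> _ S(1) _ _ onto _ x] by blast
qed

section \<open>The discrete domain\<close>

lemma simplex_convex_compact_diameter_pos:
  fixes T :: "'a::euclidean_space set"
  assumes "0 < n" "n simplex T"
  shows "convex T" "compact T" "0 < diameter T"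
proof -
  obtain C where C: "finite C" "int (card C) = n + 1" "T = convex hull C"
    using assms(2) unfolding simplex by blast
  show "convex T" using C by simp
  show "compact T" using C by (simp add: compact_convex_hull finite_imp_compact)
  have "\<not> card C \<le> Suc 0" using C(2) assms(1) by linarith
  then obtain a b where ab: "a \<in> C" "b \<in> C" "a \<noteq> b"
    using card_le_Suc0_iff_eq[OF C(1)] by blast
  moreover have "C \<subseteq> T" unfolding C(3) by (rule hull_subset)
  ultimately have "dist a b \<le> diameter T"
    using diameter_bounded_bound[OF compact_imp_bounded[OF \<open>compact T\<close>]] by blast
  then show "0 < diameter T" using ab(3) by (meson less_le_trans zero_less_dist_iff)
qed

lemma regular_partition_meshsize:
  fixes \<T> :: "'a::euclidean_space set set"
  assumes "regular_partition \<T> X"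
  shows "0 < meshsize \<T>" "\<And>T. T \<in> \<T> \<Longrightarrow> diameter T \<le> meshsize \<T>"
proof -
  have fin: "finite \<T>" "\<T> \<noteq> {}" and simplices: "\<And>T. T \<in> \<T> \<Longrightarrow> int DIM('a) simplex T"
    using assms unfolding regular_partition_def by auto
  show diam_le: "diameter T \<le> meshsize \<T>" if "T \<in> \<T>" for T
    unfolding meshsize_def using fin that by (intro Max_ge) auto
  obtain T where "T \<in> \<T>" using fin by blast
  then show "0 < meshsize \<T>"
    using diam_le simplex_convex_compact_diameter_pos(3)[OF _ simplices] DIM_positive
    by (meson less_le_trans of_nat_0_less_iff)
qed

lemma abs_diff_le_of_lipschitz_diameter:
  fixes f :: "'a::metric_space \<Rightarrow> real"
  assumes "L-lipschitz_on T f" "bounded T" "diameter T \<le> h" "x \<in> T" "y \<in> T"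
  shows "\<bar>f x - f y\<bar> \<le> L * h"
proof -
  have "\<bar>f x - f y\<bar> \<le> L * dist x y"
    using lipschitz_onD[OF assms(1,4,5)] by (simp add: dist_real_def)
  also have "\<dots> \<le> L * h"
    using diameter_bounded_bound[OF assms(2,4,5)] assms(3) lipschitz_on_nonneg[OF assms(1)]
    by (intro mult_left_mono) auto
  finally show ?thesis .
qed

lemma U_nbhd_subset_active_elements:
  assumes cover: "\<Omega> \<subseteq> \<Union>\<T>"
    and osc: "\<forall>T\<in>\<T>. \<forall>x\<in>T. \<forall>y\<in>T. \<bar>\<phi> x - \<phi> y\<bar> \<le> c1 * h"
    and nodes: "\<forall>T\<in>\<T>. \<forall>i\<in>{1..L}. \<Phi> T (bh i) \<in> T"
  shows "U_nbhd \<Omega> \<phi> (\<epsilon> * arccos (h / \<epsilon>) - c1 * h) \<subseteq> \<Union> (active_elements \<T> \<Phi> L bh \<phi> \<epsilon> h)"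
proof
  fix x assume "x \<in> U_nbhd \<Omega> \<phi> (\<epsilon> * arccos (h / \<epsilon>) - c1 * h)"
  then have x: "x \<in> \<Omega>" "\<bar>\<phi> x\<bar> < \<epsilon> * arccos (h / \<epsilon>) - c1 * h" by (auto simp: U_nbhd_def)
  then obtain T where T: "T \<in> \<T>" "x \<in> T" using cover by blast
  have "\<bar>\<phi> (\<Phi> T (bh i))\<bar> \<le> \<epsilon> * arccos (h / \<epsilon>)" if "i \<in> {1..L}" for i
    using osc[rule_format, OF T(1) nodes[rule_format, OF T(1) that] T(2)] x(2) by linarith
  then have "T \<in> active_elements \<T> \<Phi> L bh \<phi> \<epsilon> h" using T(1) by (simp add: active_elements_def)
  then show "x \<in> \<Union> (active_elements \<T> \<Phi> L bh \<phi> \<epsilon> h)" using T(2) by blast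
qed

lemma active_elements_level_bound:
  assumes osc: "\<forall>T\<in>\<T>. \<forall>x\<in>T. \<forall>y\<in>T. \<bar>\<phi> x - \<phi> y\<bar> \<le> c1 * h"
    and nodes: "\<forall>T\<in>\<T>. \<forall>i\<in>{1..L}. \<Phi> T (bh i) \<in> T" and "1 \<le> L"
    and x: "x \<in> \<Union> (active_elements \<T> \<Phi> L bh \<phi> \<epsilon> h)"
  shows "x \<in> \<Union>\<T>" "\<bar>\<phi> x\<bar> \<le> \<epsilon> * arccos (h / \<epsilon>) + c1 * h"
proof -
  obtain T where T: "T \<in> \<T>" "x \<in> T"
    and active: "\<forall>i\<in>{1..L}. \<bar>\<phi> (\<Phi> T (bh i))\<bar> \<le> \<epsilon> * arccos (h / \<epsilon>)"
    using x unfolding active_elements_def by blast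
  show "x \<in> \<Union>\<T>" using T by blast
  have "1 \<in> {1..L}" using \<open>1 \<le> L\<close> by simp
  then show "\<bar>\<phi> x\<bar> \<le> \<epsilon> * arccos (h / \<epsilon>) + c1 * h"
    using osc[rule_format, OF T(1) T(2) nodes[rule_format, OF T(1)]] active by fastforce
qed

lemma regular_partition_oscillation:
  fixes \<T> :: "'a::euclidean_space set set"
  assumes part: "regular_partition \<T> X"
    and lip: "\<And>T. convex T \<Longrightarrow> T \<subseteq> X \<Longrightarrow> c1-lipschitz_on T \<phi>"
  shows "\<forall>T\<in>\<T>. \<forall>x\<in>T. \<forall>y\<in>T. \<bar>\<phi> x - \<phi> y\<bar> \<le> c1 * meshsize \<T>"
proof (intro ballI)
  fix T x y assume T: "T \<in> \<T>" and xy: "x \<in> T" "y \<in> T"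
  have "int DIM('a) simplex T" "T \<subseteq> X" using part T by (auto simp: regular_partition_def)
  then have "convex T" "compact T" "T \<subseteq> X"
    using simplex_convex_compact_diameter_pos DIM_positive by (meson of_nat_0_less_iff)+
  then show "\<bar>\<phi> x - \<phi> y\<bar> \<le> c1 * meshsize \<T>"
    using abs_diff_le_of_lipschitz_diameter[OF lip compact_imp_bounded _ xy]
      regular_partition_meshsize(2)[OF part T] by blast
qed

lemma mesh_ratio_below_r0_of:
  assumes "0 < c1" "0 < h" "\<epsilon> = \<gamma> * h" "1 / r0_of c1 < \<gamma>"
  shows "0 < \<epsilon>" "0 < h / \<epsilon>" "h / \<epsilon> < r0_of c1" "h / \<epsilon> < 1"
proof -
  have r0: "0 < r0_of c1" "r0_of c1 < 1" using r0_of_root[OF assms(1)] by auto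
  then have "1 < \<gamma>" using assms(4) by (smt (verit) less_divide_eq_1_pos)
  then have "h / \<epsilon> = 1 / \<gamma>" using assms(2,3) by simp
  then show "0 < \<epsilon>" "0 < h / \<epsilon>" "h / \<epsilon> < r0_of c1" "h / \<epsilon> < 1"
    using \<open>1 < \<gamma>\<close> assms r0 by (auto simp: field_simps)
qed

lemma arccos_band_width_lt:
  fixes c1 h \<epsilon> :: real
  assumes "0 < c1" "0 < h" "h < \<epsilon>"
  shows "\<epsilon> * arccos (h / \<epsilon>) + c1 * h < (pi / 2 + c1) * \<epsilon>"
proof -
  have "arccos (h / \<epsilon>) \<le> pi / 2" using assms by (intro arccos_le_pi2) auto
  then have "\<epsilon> * arccos (h / \<epsilon>) \<le> \<epsilon> * (pi / 2)" using assms by (intro mult_left_mono) auto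
  moreover have "c1 * h < c1 * \<epsilon>" using assms by simp
  ultimately show ?thesis by (simp add: algebra_simps)
qed

lemma discrete_domain_properties:
  fixes \<T> :: "'a::euclidean_space set set" and \<phi> :: "'a \<Rightarrow> real"
  assumes part: "regular_partition \<T> (closure \<Omega>)"
    and \<Phi>: "\<forall>T\<in>\<T>. \<Phi> T ` ref_simplex = T" and bh: "\<forall>i\<in>{1..L}. bh i \<in> ref_simplex"
    and "1 \<le> L"
    and lip: "\<And>T. convex T \<Longrightarrow> T \<subseteq> closure \<Omega> \<Longrightarrow> c1-lipschitz_on T \<phi>"
    and band: "\<And>x. x \<in> closure \<Omega> \<Longrightarrow> \<bar>\<phi> x\<bar> < \<delta> \<Longrightarrow> x \<in> \<Omega>"
    and \<Gamma>_def: "\<Gamma> = {x\<in>\<Omega>. \<phi> x = 0}" and "0 < c1"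
    and \<epsilon>: "\<epsilon> = \<gamma> * meshsize \<T>" and \<gamma>: "\<gamma> > 1 / r0_of c1"
    and small: "(pi / 2 + c1) * \<epsilon> < \<delta>"
  shows "let h = meshsize \<T>;
          \<epsilon>h = \<epsilon> * arccos (h / \<epsilon>) - c1 * h;
          D = \<Union> (active_elements \<T> \<Phi> L bh \<phi> \<epsilon> h)
      in \<epsilon>h > 0 \<and>
         \<Gamma> \<subseteq> U_nbhd \<Omega> \<phi> \<epsilon>h \<and> U_nbhd \<Omega> \<phi> \<epsilon>h \<subseteq> D \<and>
         D \<subseteq> U_nbhd \<Omega> \<phi> ((pi / 2 + c1) * \<epsilon>) \<and>
         U_nbhd \<Omega> \<phi> ((pi / 2 + c1) * \<epsilon>) \<subseteq> U_nbhd \<Omega> \<phi> \<delta> \<and>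
         (\<forall>x \<in> D - U_nbhd \<Omega> \<phi> \<epsilon>h.
            sigma_pf q (\<phi> x / \<epsilon>) \<le> (1 + c1) ^ (2 * (q + 1)) * (h / \<epsilon>) ^ (2 * (q + 1)))"
proof -
  define h where "h = meshsize \<T>"
  define D where "D = \<Union> (active_elements \<T> \<Phi> L bh \<phi> \<epsilon> h)"
  define t where "t = h / \<epsilon>"
  have cover: "\<Union>\<T> = closure \<Omega>" using part by (simp add: regular_partition_def)
  have nodes: "\<forall>T\<in>\<T>. \<forall>i\<in>{1..L}. \<Phi> T (bh i) \<in> T" using \<Phi> bh by blast
  have osc: "\<forall>T\<in>\<T>. \<forall>x\<in>T. \<forall>y\<in>T. \<bar>\<phi> x - \<phi> y\<bar> \<le> c1 * h"
    unfolding h_def by (rule regular_partition_oscillation[OF part lip])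
  have "0 < \<epsilon>" "0 < t" "t < r0_of c1" "t < 1"
    using mesh_ratio_below_r0_of[OF \<open>0 < c1\<close> regular_partition_meshsize(1)[OF part] \<epsilon> \<gamma>]
    by (simp_all add: t_def h_def)
  have "c1 * t < arccos t" using mult_less_arccos_below_r0_of[OF \<open>0 < c1\<close> \<open>0 < t\<close> \<open>t < r0_of c1\<close>] .
  have \<epsilon>h_eq: "\<epsilon> * arccos (h / \<epsilon>) - c1 * h = \<epsilon> * (arccos t - c1 * t)"
    using \<open>0 < \<epsilon>\<close> by (simp add: t_def algebra_simps)
  have "h < \<epsilon>" using \<open>t < 1\<close> \<open>0 < \<epsilon>\<close> by (simp add: t_def)
  have D_level: "x \<in> closure \<Omega> \<and> \<bar>\<phi> x\<bar> < (pi / 2 + c1) * \<epsilon>" if "x \<in> D" for x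
    using active_elements_level_bound[OF osc nodes \<open>1 \<le> L\<close> that[unfolded D_def]] cover
      arccos_band_width_lt[OF \<open>0 < c1\<close> regular_partition_meshsize(1)[OF part, folded h_def] \<open>h < \<epsilon>\<close>]
    by simp
  have sigma: "sigma_pf q (\<phi> x / \<epsilon>) \<le> (1 + c1) ^ (2 * (q + 1)) * (h / \<epsilon>) ^ (2 * (q + 1))"
    if "x \<in> D - U_nbhd \<Omega> \<phi> (\<epsilon> * arccos (h / \<epsilon>) - c1 * h)" for x
  proof -
    have "x \<in> closure \<Omega>" "\<bar>\<phi> x\<bar> < \<delta>" using D_level[of x] that small by auto
    then have "x \<in> \<Omega>" by (rule band)
    then have "\<epsilon> * (arccos t - c1 * t) \<le> \<bar>\<phi> x\<bar>" using that \<epsilon>h_eq by (auto simp: U_nbhd_def)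
    then have "sigma_pf q (\<phi> x / \<epsilon>) \<le> ((1 + c1) * t) ^ (2 * (q + 1))"
      using \<open>0 < c1\<close> \<open>0 < t\<close> \<open>t < 1\<close> \<open>c1 * t < arccos t\<close> \<open>0 < \<epsilon>\<close>
      by (intro sigma_pf_le_outside_band) auto
    then show ?thesis by (simp only: t_def power_mult_distrib)
  qed
  show ?thesis
    unfolding Let_def h_def[symmetric] D_def[symmetric]
  proof (intro conjI ballI)
    show "0 < \<epsilon> * arccos (h / \<epsilon>) - c1 * h"
      using \<epsilon>h_eq \<open>0 < \<epsilon>\<close> \<open>c1 * t < arccos t\<close> by simp
    then show "\<Gamma> \<subseteq> U_nbhd \<Omega> \<phi> (\<epsilon> * arccos (h / \<epsilon>) - c1 * h)"
      by (auto simp: \<Gamma>_def U_nbhd_def)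
    show "U_nbhd \<Omega> \<phi> (\<epsilon> * arccos (h / \<epsilon>) - c1 * h) \<subseteq> D"
      unfolding D_def using cover closure_subset[of \<Omega>]
      by (intro U_nbhd_subset_active_elements[OF _ osc nodes]) auto
    show "D \<subseteq> U_nbhd \<Omega> \<phi> ((pi / 2 + c1) * \<epsilon>)"
    proof
      fix x assume "x \<in> D"
      then have "x \<in> closure \<Omega>" "\<bar>\<phi> x\<bar> < (pi / 2 + c1) * \<epsilon>" using D_level by auto
      then show "x \<in> U_nbhd \<Omega> \<phi> ((pi / 2 + c1) * \<epsilon>)"
        using band small by (simp add: U_nbhd_def)
    qed
    show "U_nbhd \<Omega> \<phi> ((pi / 2 + c1) * \<epsilon>) \<subseteq> U_nbhd \<Omega> \<phi> \<delta>"
      using small by (auto simp: U_nbhd_def)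
  qed (rule sigma)
qed

theorem mainTheorem1:
  fixes \<Gamma> \<Omega> :: "'a::euclidean_space set"
    and \<phi> :: "'a \<Rightarrow> real"
    and A :: "'a \<Rightarrow> 'a \<Rightarrow> 'a"
    and c0 c1 \<delta> :: real
    and q L :: nat and \<omega> :: "nat \<Rightarrow> real" and bh :: "nat \<Rightarrow> 'a"
  assumes dim: "DIM('a) = 2 \<or> DIM('a) = 3"
    and \<Omega>_open: "open \<Omega>" and \<Omega>_bdd: "bounded \<Omega>"
    and \<phi>_smooth: "\<exists>S. closure \<Omega> \<subseteq> S \<and> smooth_on S \<phi>"
    and \<Gamma>_def: "\<Gamma> = {x\<in>\<Omega>. \<phi> x = 0}"
    and \<Gamma>_compact: "compact \<Gamma>" and \<Gamma>_connected: "connected \<Gamma>" and \<Gamma>_ne: "\<Gamma> \<noteq> {}"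
    and c01: "0 < c0" "c0 \<le> c1"
    and grad_bounds: "\<forall>x\<in>closure \<Omega>. c0 \<le> norm (grad \<phi> x) \<and> norm (grad \<phi> x) \<le> c1"
    and A_lin: "\<forall>p\<in>\<Gamma>. linear (A p)"
    and A_sym: "\<forall>p\<in>\<Gamma>. \<forall>x y. A p x \<bullet> y = x \<bullet> A p y"
    and A_pd: "\<forall>p\<in>\<Gamma>. \<forall>x. x \<noteq> 0 \<longrightarrow> A p x \<bullet> x > 0"
    and A_cont: "continuous_on \<Gamma> (\<lambda>p. A p)"
    and \<delta>_pos: "0 < \<delta>"
    and flow: "\<exists>\<gamma> :: 'a \<Rightarrow> real \<Rightarrow> 'a.
        (\<forall>p\<in>\<Gamma>. \<gamma> p 0 = p \<and>
          (\<forall>s\<in>{-\<delta><..<\<delta>}. \<gamma> p s \<in> closure \<Omega> \<and>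
             (\<gamma> p has_vector_derivative
                (A p (grad \<phi> (\<gamma> p s)) /\<^sub>R (A p (grad \<phi> (\<gamma> p s)) \<bullet> grad \<phi> (\<gamma> p s)))) (at s)) \<and>
          (\<forall>\<eta> :: real \<Rightarrow> 'a. \<eta> 0 = p \<and>
             (\<forall>s\<in>{-\<delta><..<\<delta>}. \<eta> s \<in> closure \<Omega> \<and>
                (\<eta> has_vector_derivative
                   (A p (grad \<phi> (\<eta> s)) /\<^sub>R (A p (grad \<phi> (\<eta> s)) \<bullet> grad \<phi> (\<eta> s)))) (at s))
             \<longrightarrow> (\<forall>s\<in>{-\<delta><..<\<delta>}. \<eta> s = \<gamma> p s))) \<and>
        bij_betw (\<lambda>(p, s). \<gamma> p s) (\<Gamma> \<times> {-\<delta><..<\<delta>}) (U_nbhd \<Omega> \<phi> \<delta>)"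
    and quad: "quadrature_rule q L \<omega> bh"
  shows "\<exists>C::real. \<forall>(\<T> :: 'a set set) (\<Phi> :: 'a set \<Rightarrow> 'a \<Rightarrow> 'a) \<epsilon> \<gamma>.
     regular_partition \<T> (closure \<Omega>) \<longrightarrow>
     (\<forall>T\<in>\<T>. affine_map (\<Phi> T) \<and> inj_on (\<Phi> T) ref_simplex \<and> \<Phi> T ` ref_simplex = T) \<longrightarrow>
     \<epsilon> = \<gamma> * meshsize \<T> \<longrightarrow> \<gamma> > 1 / r0_of c1 \<longrightarrow> (pi / 2 + c1) * \<epsilon> < \<delta> \<longrightarrow>
     (let h = meshsize \<T>;
          \<epsilon>h = \<epsilon> * arccos (h / \<epsilon>) - c1 * h;
          D = \<Union> (active_elements \<T> \<Phi> L bh \<phi> \<epsilon> h)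
      in \<epsilon>h > 0 \<and>
         \<Gamma> \<subseteq> U_nbhd \<Omega> \<phi> \<epsilon>h \<and> U_nbhd \<Omega> \<phi> \<epsilon>h \<subseteq> D \<and>
         D \<subseteq> U_nbhd \<Omega> \<phi> ((pi / 2 + c1) * \<epsilon>) \<and>
         U_nbhd \<Omega> \<phi> ((pi / 2 + c1) * \<epsilon>) \<subseteq> U_nbhd \<Omega> \<phi> \<delta> \<and>
         (\<forall>x \<in> D - U_nbhd \<Omega> \<phi> \<epsilon>h. sigma_pf q (\<phi> x / \<epsilon>) \<le> C * (h / \<epsilon>) ^ (2 * (q + 1))))"
proof -
  obtain S where S: "closure \<Omega> \<subseteq> S" "smooth_on S \<phi>" using \<phi>_smooth by blast
  obtain \<gamma> where flow_ode: "\<forall>p\<in>\<Gamma>. \<gamma> p 0 = p \<and>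
          (\<forall>s\<in>{-\<delta><..<\<delta>}. \<gamma> p s \<in> closure \<Omega> \<and>
             (\<gamma> p has_vector_derivative
                (A p (grad \<phi> (\<gamma> p s)) /\<^sub>R (A p (grad \<phi> (\<gamma> p s)) \<bullet> grad \<phi> (\<gamma> p s)))) (at s))"
    and flow_bij: "bij_betw (\<lambda>(p, s). \<gamma> p s) (\<Gamma> \<times> {-\<delta><..<\<delta>}) (U_nbhd \<Omega> \<phi> \<delta>)"
    using flow by blast
  have grad_ne: "grad \<phi> x \<noteq> 0" if "x \<in> closure \<Omega>" for x
    using grad_bounds that c01(1) by fastforce
  have band: "x \<in> \<Omega>" if "x \<in> closure \<Omega>" "\<bar>\<phi> x\<bar> < \<delta>" for x
    by (rule closure_inter_band_subset_of_flow[OF \<Omega>_bdd S \<Gamma>_def \<Gamma>_compact grad_ne A_lin A_cont A_pd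
          flow_ode bij_betw_imp_surj_on[OF flow_bij] that])
  have lip: "c1-lipschitz_on T \<phi>" if "convex T" "T \<subseteq> closure \<Omega>" for T
    using that c01 grad_bounds smooth_on_differentiable[OF S(2)] S(1)
    by (intro lipschitz_on_convex_of_grad_bound) auto
  have "1 \<le> L" and bh: "\<forall>i\<in>{1..L}. bh i \<in> ref_simplex"
    using quad by (auto simp: quadrature_rule_def intro: ccontr)
  have "0 < c1" using c01 by linarith
  show ?thesis
    by (intro exI[of _ "(1 + c1) ^ (2 * (q + 1))"] allI impI
        discrete_domain_properties[OF _ _ bh \<open>1 \<le> L\<close> lip band \<Gamma>_def \<open>0 < c1\<close>])
      auto
qed

end
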